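(* Consider an RBM with observed variables $X\in\{-1,1\}^n$ and latent variables $Y\in\{-1,1\}^m$ as defined in the context, with parameters $d$ and $s$ as defined there. Fix an observed variable $u\in[n]$ and subsets $I,S\subseteq[n]$ such that $\{u\}$, $I$, $S$ are pairwise disjoint. Suppose that $I$ is a subset of the MRF neighborhood of $u$ and that $|I|\le d-1$. Then there exists a subset $I'\subseteq I$ with $|I'|\le 2^s$ such that \[\nu_{u,I'|S}\;\ge\;\frac{1}{(4d)^{2^s}}\left(\frac{1}{d}\right)^{2^s(2^s+1)}\nu_{u,I|S}.\]
   Context: A Restricted Boltzmann Machine (RBM) is a distribution over observed variables $X\in\{-1,1\}^n$ and latent variables $Y\in\{-1,1\}^m$ with $\mathbb{P}(X=x,Y=y)\propto\exp(x^TJy+h^Tx+g^Ty)$, where $J\in\mathbb{R}^{n\times m}$, $h\in\mathbb{R}^n$, $g\in\mathbb{R}^m$. Observed variable $i$ and latent variable $j$ are connected iff $J_{i,j}\neq0$; $d$ is the maximum over $j\in[m]$ of $|\{i: J_{i,j}\ne 0\}|$. The marginal of $X$ satisfies $\mathbb{P}(X=x)\propto\exp(f(x))$ with $f(x)=\sum_{j=1}^m\rho(J_j\cdot x+g_j)+h^Tx$, where $J_j$ is the $j$-th column of $J$ and $\rho(t)=\log(e^t+e^{-t})$. Write $f(x)=\sum_{T\subseteq[n]}\hat f(T)\chi_T(x)$ with $\chi_T(x)=\prod_{i\in T}x_i$ (the unique multilinear expansion). The MRF neighborhood of $u$ is the set of $i\in[n]\setminus\{u\}$ such that $\hat f(T)\ne0$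 for some $T$ with $u,i\in T$. Define $s$ as the maximum over $u\in[n]$ of the number of latent variables $j\in[m]$ such that $J_{i,j}\neq 0$ for some $i$ in the MRF neighborhood of $u$. For disjoint $\{u\},I,S$ and assignments, $\nu_{u,I|S}(x_u,x_I|x_S):=|\mathbb{P}(X_u=x_u,X_I=x_I|X_S=x_S)-\mathbb{P}(X_u=x_u|X_S=x_S)\mathbb{P}(X_I=x_I|X_S=x_S)|$, and $\nu_{u,I|S}:=\mathbb{E}_{R,G}\big[\mathbb{E}_{X_S}[\nu_{u,I|S}(R,G|X_S)]\big]$, where $R$ is uniform on $\{-1,1\}$, $G$ is uniform on $\{-1,1\}^{|I|}$, independent of each other and of $X$, and $X_S$ has the marginal law of the RBM. *)

theory Defs
  imports "HOL-Analysis.Analysis"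
begin

text \<open>Observed variables are indexed by {0..<n}, latent ones by {0..<m}.
  A configuration of k spins is an extensional function on {0..<k} with values in {-1,1}.\<close>

definition spins :: "nat set \<Rightarrow> (nat \<Rightarrow> real) set" where
  "spins A = A \<rightarrow>\<^sub>E {-1, 1}"

definition cube :: "nat \<Rightarrow> (nat \<Rightarrow> real) set" where
  "cube k = spins {0..<k}"

definition rbm_weight :: "nat \<Rightarrow> nat \<Rightarrow> (nat \<Rightarrow> nat \<Rightarrow> real) \<Rightarrow> (nat \<Rightarrow> real) \<Rightarrow> (nat \<Rightarrow> real)
    \<Rightarrow> (nat \<Rightarrow> real) \<Rightarrow> (nat \<Rightarrow> real) \<Rightarrow> real" where
  "rbm_weight n m J h g x y =
     exp ((\<Sum>i<n. \<Sum>j<m. x i * J i j * y j) + (\<Sum>i<n. h i * x i) + (\<Sum>j<m. g j * y j))"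

definition rbm_pX :: "nat \<Rightarrow> nat \<Rightarrow> (nat \<Rightarrow> nat \<Rightarrow> real) \<Rightarrow> (nat \<Rightarrow> real) \<Rightarrow> (nat \<Rightarrow> real)
    \<Rightarrow> (nat \<Rightarrow> real) \<Rightarrow> real" where
  "rbm_pX n m J h g x =
     (\<Sum>y\<in>cube m. rbm_weight n m J h g x y) /
     (\<Sum>x'\<in>cube n. \<Sum>y\<in>cube m. rbm_weight n m J h g x' y)"

definition rbm_prob :: "nat \<Rightarrow> nat \<Rightarrow> (nat \<Rightarrow> nat \<Rightarrow> real) \<Rightarrow> (nat \<Rightarrow> real) \<Rightarrow> (nat \<Rightarrow> real)
    \<Rightarrow> ((nat \<Rightarrow> real) \<Rightarrow> bool) \<Rightarrow> real" where
  "rbm_prob n m J h g E = (\<Sum>x\<in>{x\<in>cube n. E x}. rbm_pX n m J h g x)"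

definition agrees :: "nat set \<Rightarrow> (nat \<Rightarrow> real) \<Rightarrow> (nat \<Rightarrow> real) \<Rightarrow> bool" where
  "agrees A a x \<longleftrightarrow> (\<forall>i\<in>A. x i = a i)"

definition rbm_cond :: "nat \<Rightarrow> nat \<Rightarrow> (nat \<Rightarrow> nat \<Rightarrow> real) \<Rightarrow> (nat \<Rightarrow> real) \<Rightarrow> (nat \<Rightarrow> real)
    \<Rightarrow> ((nat \<Rightarrow> real) \<Rightarrow> bool) \<Rightarrow> nat set \<Rightarrow> (nat \<Rightarrow> real) \<Rightarrow> real" where
  "rbm_cond n m J h g E S xS =
     rbm_prob n m J h g (\<lambda>x. E x \<and> agrees S xS x) / rbm_prob n m J h g (agrees S xS)"

definition nu_pt :: "nat \<Rightarrow> nat \<Rightarrow> (nat \<Rightarrow> nat \<Rightarrow> real) \<Rightarrow> (nat \<Rightarrow> real) \<Rightarrow> (nat \<Rightarrow> real)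
    \<Rightarrow> nat \<Rightarrow> nat set \<Rightarrow> nat set \<Rightarrow> real \<Rightarrow> (nat \<Rightarrow> real) \<Rightarrow> (nat \<Rightarrow> real) \<Rightarrow> real" where
  "nu_pt n m J h g u I S r xI xS =
     \<bar>rbm_cond n m J h g (\<lambda>x. x u = r \<and> agrees I xI x) S xS
      - rbm_cond n m J h g (\<lambda>x. x u = r) S xS * rbm_cond n m J h g (agrees I xI) S xS\<bar>"

text \<open>nu_{u,I|S} = E_{R,G}[E_{X_S}[nu_{u,I|S}(R,G|X_S)]], R uniform on {-1,1},
  G uniform on {-1,1}^I, X_S with the RBM marginal law.\<close>
definition nu :: "nat \<Rightarrow> nat \<Rightarrow> (nat \<Rightarrow> nat \<Rightarrow> real) \<Rightarrow> (nat \<Rightarrow> real) \<Rightarrow> (nat \<Rightarrow> real)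
    \<Rightarrow> nat \<Rightarrow> nat set \<Rightarrow> nat set \<Rightarrow> real" where
  "nu n m J h g u I S =
     (\<Sum>r\<in>{-1, 1::real}. \<Sum>G\<in>spins I. (1/2) * (1 / 2 ^ card I) *
        (\<Sum>xS\<in>spins S. rbm_prob n m J h g (agrees S xS) * nu_pt n m J h g u I S r G xS))"

definition rho :: "real \<Rightarrow> real" where
  "rho t = ln (exp t + exp (- t))"

definition rbm_f :: "nat \<Rightarrow> nat \<Rightarrow> (nat \<Rightarrow> nat \<Rightarrow> real) \<Rightarrow> (nat \<Rightarrow> real) \<Rightarrow> (nat \<Rightarrow> real)
    \<Rightarrow> (nat \<Rightarrow> real) \<Rightarrow> real" where
  "rbm_f n m J h g x = (\<Sum>j<m. rho ((\<Sum>i<n. J i j * x i) + g j)) + (\<Sum>i<n. h i * x i)"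

definition chi :: "nat set \<Rightarrow> (nat \<Rightarrow> real) \<Rightarrow> real" where
  "chi T x = (\<Prod>i\<in>T. x i)"

text \<open>Coefficient of chi_T in the unique multilinear expansion of a function on {-1,1}^n.\<close>
definition fourier :: "nat \<Rightarrow> ((nat \<Rightarrow> real) \<Rightarrow> real) \<Rightarrow> nat set \<Rightarrow> real" where
  "fourier n F T = (\<Sum>x\<in>cube n. F x * chi T x) / 2 ^ n"

definition mrf_nbhd :: "nat \<Rightarrow> nat \<Rightarrow> (nat \<Rightarrow> nat \<Rightarrow> real) \<Rightarrow> (nat \<Rightarrow> real) \<Rightarrow> (nat \<Rightarrow> real)
    \<Rightarrow> nat \<Rightarrow> nat set" where
  "mrf_nbhd n m J h g u =
     {i\<in>{0..<n} - {u}. \<exists>T\<subseteq>{0..<n}. u \<in> T \<and> i \<in> T \<and> fourier n (rbm_f n m J h g) T \<noteq> 0}"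

definition rbm_d :: "nat \<Rightarrow> nat \<Rightarrow> (nat \<Rightarrow> nat \<Rightarrow> real) \<Rightarrow> nat" where
  "rbm_d n m J = Max (insert 0 ((\<lambda>j. card {i\<in>{0..<n}. J i j \<noteq> 0}) ` {0..<m}))"

definition rbm_s :: "nat \<Rightarrow> nat \<Rightarrow> (nat \<Rightarrow> nat \<Rightarrow> real) \<Rightarrow> (nat \<Rightarrow> real) \<Rightarrow> (nat \<Rightarrow> real) \<Rightarrow> nat" where
  "rbm_s n m J h g = Max (insert 0 ((\<lambda>u. card {j\<in>{0..<m}. \<exists>i\<in>mrf_nbhd n m J h g u. J i j \<noteq> 0}) ` {0..<n}))"

end

theory Submission
  imports Defs
begin

text \<open>Given the latent spins Y, the observed spins are independent, and for i in I the law
  P(X_i = s | Y = y) depends only on the at most s latent spins adjacent to I. Hence, after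
  clearing a denominator that depends neither on T \<subseteq> I nor on the assignment G, the covariance
  nu_{u,T|S}(r, G | x_S) is the absolute value of a moment sum_z a(z) prod_{i in T} q_i(z) over
  at most 2^s points z, with |q_i| \<le> 1. Such a moment over k points is bounded by (2|I| + 1)^k
  times the sum of the moments of the subsets of I of size at most k. Averaging over r, G and x_S
  and choosing the best of the at most d^k small subsets gives the claim.\<close>

section \<open>Moments of products over few support points\<close>

definition weighted_moment :: "'y set \<Rightarrow> ('y \<Rightarrow> real) \<Rightarrow> (nat \<Rightarrow> 'y \<Rightarrow> real) \<Rightarrow> nat set \<Rightarrow> real" where
  "weighted_moment Y a q T = (\<Sum>y\<in>Y. a y * (\<Prod>i\<in>T. q i y))"

lemma weighted_moment_insert:
  assumes "finite Y" "y0 \<in> Y" "finite T" "j \<notin> T"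
  shows "weighted_moment Y a q (insert j T) =
    weighted_moment (Y - {y0}) (\<lambda>y. a y * (q j y - q j y0)) q T + q j y0 * weighted_moment Y a q T"
proof -
  have "weighted_moment (Y - {y0}) (\<lambda>y. a y * (q j y - q j y0)) q T =
      (\<Sum>y\<in>Y. a y * (q j y - q j y0) * (\<Prod>i\<in>T. q i y))"
    unfolding weighted_moment_def using assms by (intro sum.mono_neutral_left) auto
  also have "\<dots> = weighted_moment Y a q (insert j T) - q j y0 * weighted_moment Y a q T"
    using assms by (simp add: weighted_moment_def sum_distrib_left sum_subtractf[symmetric] algebra_simps)
  finally show ?thesis by simp
qed

text \<open>Splitting off one support point \<open>z\<close> (\<open>weighted_moment_insert\<close>) leaves a moment over the
  remaining points whose moments on small subsets are bounded by \<open>2 * B\<close>; \<open>fewer_points\<close> is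
  the induction hypothesis for those points.\<close>

lemma weighted_moment_le_small_subsets_step:
  assumes "finite Y" "z \<in> Y" "finite I" "\<And>i y. i \<in> I \<Longrightarrow> \<bar>q i y\<bar> \<le> 1"
    and small: "\<And>T. T \<subseteq> I \<Longrightarrow> card T \<le> Suc k \<Longrightarrow> \<bar>weighted_moment Y a q T\<bar> \<le> B"
    and fewer_points: "\<And>a' I' B'. I' \<subseteq> I \<Longrightarrow>
      (\<And>T. T \<subseteq> I' \<Longrightarrow> card T \<le> k \<Longrightarrow> \<bar>weighted_moment (Y - {z}) a' q T\<bar> \<le> B') \<Longrightarrow>
      \<bar>weighted_moment (Y - {z}) a' q I'\<bar> \<le> (2 * real (card I') + 1) ^ k * B'"
  shows "\<bar>weighted_moment Y a q I\<bar> \<le> (2 * real (card I) + 1) ^ Suc k * B"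
proof -
  have B0: "0 \<le> B" using small[of "{}"] by auto
  have "\<bar>weighted_moment Y a q I0\<bar> \<le> (2 * real (card I0) + 1) ^ Suc k * B"
    if "finite I0" "I0 \<subseteq> I" for I0
    using that
  proof (induction I0 rule: finite_induct)
    case empty
    then show ?case using small[of "{}"] by simp
  next
    case (insert j I0)
    define a' where "a' y = a y * (q j y - q j z)" for y
    have step: "weighted_moment Y a q (insert j T) =
        weighted_moment (Y - {z}) a' q T + q j z * weighted_moment Y a q T" if "T \<subseteq> I0" for T
    proof -
      have "finite T" "j \<notin> T" using that insert.hyps finite_subset by auto
      then show ?thesis unfolding a'_def by (rule weighted_moment_insert[OF assms(1,2)])
    qed
    have shrink: "\<bar>q j z * weighted_moment Y a q T\<bar> \<le> \<bar>weighted_moment Y a q T\<bar>" for T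
      using assms(4)[of j z] insert.prems by (simp add: abs_mult mult_left_le_one_le)
    have "\<bar>weighted_moment (Y - {z}) a' q T\<bar> \<le> 2 * B" if "T \<subseteq> I0" "card T \<le> k" for T
    proof -
      have "finite T" "j \<notin> T" using that insert finite_subset by auto
      then have "\<bar>weighted_moment Y a q (insert j T)\<bar> \<le> B" "\<bar>weighted_moment Y a q T\<bar> \<le> B"
        using that insert.prems by (auto intro!: small)
      then show ?thesis using step[OF that(1)] shrink[of T] by linarith
    qed
    then have "\<bar>weighted_moment (Y - {z}) a' q I0\<bar> \<le> (2 * real (card I0) + 1) ^ k * (2 * B)"
      using insert.prems by (intro fewer_points) auto
    then have "\<bar>weighted_moment Y a q (insert j I0)\<bar> \<le>
        (2 * real (card I0) + 1) ^ k * (2 * B) + (2 * real (card I0) + 1) ^ Suc k * B"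
      using step[of I0] shrink[of I0] insert by fastforce
    also have "\<dots> = (2 * real (card I0) + 1) ^ k * (2 * real (card I0) + 3) * B"
      by (simp add: algebra_simps)
    also have "\<dots> \<le> (2 * real (card I0) + 3) ^ k * (2 * real (card I0) + 3) * B"
      using B0 by (intro mult_right_mono power_mono) auto
    also have "\<dots> = (2 * real (card (insert j I0)) + 1) ^ Suc k * B"
      using insert by (simp add: algebra_simps)
    finally show ?case .
  qed
  then show ?thesis using assms(3) by blast
qed

lemma weighted_moment_le_small_subsets:
  assumes "finite Y" "card Y \<le> k" "finite I" "\<And>i y. i \<in> I \<Longrightarrow> \<bar>q i y\<bar> \<le> 1"
    and "\<And>T. T \<subseteq> I \<Longrightarrow> card T \<le> k \<Longrightarrow> \<bar>weighted_moment Y a q T\<bar> \<le> B"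
  shows "\<bar>weighted_moment Y a q I\<bar> \<le> (2 * real (card I) + 1) ^ k * B"
  using assms
proof (induction k arbitrary: Y a I B)
  case 0
  then have "Y = {}" by auto
  with "0.prems"(5)[of "{}"] show ?case by (simp add: weighted_moment_def)
next
  case (Suc k)
  show ?case
  proof (cases "Y = {}")
    case True
    then show ?thesis using Suc.prems(5)[of "{}"] by (simp add: weighted_moment_def)
  next
    case False
    then obtain z where "z \<in> Y" by auto
    with Suc.prems show ?thesis
      by (intro weighted_moment_le_small_subsets_step[where z=z and k=k] Suc.IH)
        (auto intro: finite_subset)
  qed
qed

lemma weighted_moment_image:
  assumes "finite Y" "\<And>i y. i \<in> T \<Longrightarrow> y \<in> Y \<Longrightarrow> q i (\<pi> y) = q i y"
  shows "weighted_moment Y a q T = weighted_moment (\<pi> ` Y) (\<lambda>z. \<Sum>y\<in>{y\<in>Y. \<pi> y = z}. a y) q T"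
proof -
  have "weighted_moment Y a q T = (\<Sum>z\<in>\<pi> ` Y. \<Sum>y\<in>{y\<in>Y. \<pi> y = z}. a y * (\<Prod>i\<in>T. q i y))"
    unfolding weighted_moment_def using assms(1) by (intro sum.group[symmetric]) auto
  also have "\<dots> = weighted_moment (\<pi> ` Y) (\<lambda>z. \<Sum>y\<in>{y\<in>Y. \<pi> y = z}. a y) q T"
    unfolding weighted_moment_def sum_distrib_right using assms(2) by (intro sum.cong prod.cong) auto
  finally show ?thesis .
qed

lemma card_subsets_card_le:
  assumes "finite I"
  shows "card {T. T \<subseteq> I \<and> card T \<le> K} \<le> (card I + 1) ^ K"
proof -
  have fin: "finite {T. T \<subseteq> I \<and> card T = k}" for k
    by (rule rev_finite_subset[of "Pow I"]) (use assms in auto)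
  have "{T. T \<subseteq> I \<and> card T \<le> K} = (\<Union>k\<le>K. {T. T \<subseteq> I \<and> card T = k})" by auto
  also have "card \<dots> = (\<Sum>k\<le>K. card {T. T \<subseteq> I \<and> card T = k})"
    by (rule card_UN_disjoint) (auto simp: fin)
  also have "\<dots> = (\<Sum>k\<le>K. card I choose k)"
    using assms by (simp add: n_subsets)
  also have "\<dots> \<le> (\<Sum>k\<le>K. (K choose k) * card I ^ k)"
  proof (intro sum_mono)
    fix k assume "k \<in> {..K}"
    have "card I choose k \<le> card I ^ k"
      by (cases "k \<le> card I") (auto simp: binomial_le_pow binomial_eq_0)
    also have "\<dots> \<le> (K choose k) * card I ^ k"
      using \<open>k \<in> {..K}\<close> by (simp add: Suc_leI)
    finally show "card I choose k \<le> (K choose k) * card I ^ k" .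
  qed
  also have "\<dots> = (card I + 1) ^ K"
    using binomial_ring[of "card I" 1 K] by (simp add: mult_ac)
  finally show ?thesis .
qed

section \<open>Averages over spin configurations\<close>

lemma card_spins: "finite A \<Longrightarrow> card (spins A) = 2 ^ card A"
  by (simp add: spins_def card_PiE numeral_2_eq_2)

lemma finite_spins: "finite A \<Longrightarrow> finite (spins A)"
  by (simp add: spins_def finite_PiE)

lemma finite_cube: "finite (cube m)"
  by (simp add: cube_def finite_spins)

lemma cube_nonempty: "cube m \<noteq> {}"
  by (simp add: cube_def spins_def PiE_eq_empty_iff)

lemma sum_spins_Un_indep:
  fixes F :: "(nat \<Rightarrow> real) \<Rightarrow> real"
  assumes "finite D" "T \<inter> D = {}" "\<And>G G'. (\<forall>i\<in>T. G i = G' i) \<Longrightarrow> F G = F G'"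
  shows "(\<Sum>G\<in>spins (T \<union> D). F G) = 2 ^ card D * (\<Sum>G\<in>spins T. F G)"
  using assms(1,2)
proof (induction D rule: finite_induct)
  case empty
  then show ?case by simp
next
  case (insert i D)
  then have i: "i \<notin> T \<union> D" by auto
  have "(\<Sum>G\<in>spins (T \<union> insert i D). F G) = (\<Sum>(s, G)\<in>{-1, 1} \<times> spins (T \<union> D). F (G(i := s)))"
    unfolding spins_def using inj_combinator[OF i, of "\<lambda>_. {-1, 1::real}"]
    by (simp add: PiE_insert_eq sum.reindex split_def)
  also have "\<dots> = (\<Sum>s\<in>{-1, 1::real}. \<Sum>G\<in>spins (T \<union> D). F G)"
  proof -
    have "F (G(i := s)) = F G" for s G
      using i by (intro assms(3)) auto
    then show ?thesis by (simp add: sum.cartesian_product[symmetric])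
  qed
  also have "\<dots> = 2 ^ card (insert i D) * (\<Sum>G\<in>spins T. F G)"
    using insert by simp
  finally show ?case .
qed

lemma nu_pt_agrees_cong:
  "(\<forall>i\<in>T. G i = G' i) \<Longrightarrow> nu_pt n m J h g u T S r G xS = nu_pt n m J h g u T S r G' xS"
  unfolding nu_pt_def agrees_def by simp

lemma nu_eq_average:
  assumes "T \<subseteq> I" "finite I"
  shows "nu n m J h g u T S = (\<Sum>r\<in>{-1, 1::real}. \<Sum>G\<in>spins I. \<Sum>xS\<in>spins S.
    rbm_prob n m J h g (agrees S xS) / (2 * 2 ^ card I) * nu_pt n m J h g u T S r G xS)"
  unfolding nu_def
proof (rule sum.cong[OF refl])
  fix r
  define F where "F G = (\<Sum>xS\<in>spins S. rbm_prob n m J h g (agrees S xS) * nu_pt n m J h g u T S r G xS)" for G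
  have "finite T" using assms finite_subset by blast
  then have "T \<union> (I - T) = I" "card I = card T + card (I - T)"
    using assms card_Diff_subset[of T I] card_mono[of I T] by auto
  moreover have "(\<Sum>G\<in>spins (T \<union> (I - T)). F G) = 2 ^ card (I - T) * (\<Sum>G\<in>spins T. F G)"
  proof (rule sum_spins_Un_indep)
    show "F G = F G'" if "\<forall>i\<in>T. G i = G' i" for G G'
      unfolding F_def using nu_pt_agrees_cong[OF that] by simp
  qed (use assms in auto)
  ultimately have "(\<Sum>G\<in>spins I. F G) / (2 * 2 ^ card I) = (\<Sum>G\<in>spins T. F G) / (2 * 2 ^ card T)"
    by (simp add: power_add)
  then show "(\<Sum>G\<in>spins T. 1 / 2 * (1 / 2 ^ card T) * F G) =
    (\<Sum>G\<in>spins I. \<Sum>xS\<in>spins S. rbm_prob n m J h g (agrees S xS) / (2 * 2 ^ card I) * nu_pt n m J h g u T S r G xS)"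
    by (simp add: F_def sum_divide_distrib sum_distrib_left)
qed

lemma rbm_prob_nonneg: "rbm_prob n m J h g E \<ge> 0"
  unfolding rbm_prob_def rbm_pX_def rbm_weight_def
  by (intro sum_nonneg divide_nonneg_nonneg) auto

lemma nu_nonneg: "nu n m J h g u T S \<ge> 0"
  unfolding nu_def nu_pt_def
  by (intro sum_nonneg mult_nonneg_nonneg rbm_prob_nonneg) auto

section \<open>Conditional structure of the RBM\<close>

definition obs_field :: "nat \<Rightarrow> (nat \<Rightarrow> nat \<Rightarrow> real) \<Rightarrow> (nat \<Rightarrow> real) \<Rightarrow> nat \<Rightarrow> (nat \<Rightarrow> real) \<Rightarrow> real" where
  "obs_field m J h i y = (\<Sum>j<m. J i j * y j) + h i"

definition obs_norm :: "nat \<Rightarrow> (nat \<Rightarrow> nat \<Rightarrow> real) \<Rightarrow> (nat \<Rightarrow> real) \<Rightarrow> nat \<Rightarrow> (nat \<Rightarrow> real) \<Rightarrow> real" where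
  "obs_norm m J h i y = exp (obs_field m J h i y) + exp (- obs_field m J h i y)"

text \<open>The conditional law \<open>P(X\<^sub>i = s | Y = y)\<close>.\<close>

definition obs_cond :: "nat \<Rightarrow> (nat \<Rightarrow> nat \<Rightarrow> real) \<Rightarrow> (nat \<Rightarrow> real) \<Rightarrow> nat \<Rightarrow> real \<Rightarrow> (nat \<Rightarrow> real) \<Rightarrow> real" where
  "obs_cond m J h i s y = exp (s * obs_field m J h i y) / obs_norm m J h i y"

text \<open>The joint weight of \<open>Y = y\<close> and \<open>X\<^sub>D = v\<^sub>D\<close>, the free observed spins summed out.\<close>

definition clamped_weight :: "nat \<Rightarrow> nat \<Rightarrow> (nat \<Rightarrow> nat \<Rightarrow> real) \<Rightarrow> (nat \<Rightarrow> real) \<Rightarrow> (nat \<Rightarrow> real)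
    \<Rightarrow> nat set \<Rightarrow> (nat \<Rightarrow> real) \<Rightarrow> (nat \<Rightarrow> real) \<Rightarrow> real" where
  "clamped_weight n m J h g D v y = exp (\<Sum>j<m. g j * y j) *
     (\<Prod>i<n. if i \<in> D then exp (v i * obs_field m J h i y) else obs_norm m J h i y)"

definition rbm_mass :: "nat \<Rightarrow> nat \<Rightarrow> (nat \<Rightarrow> nat \<Rightarrow> real) \<Rightarrow> (nat \<Rightarrow> real) \<Rightarrow> (nat \<Rightarrow> real)
    \<Rightarrow> ((nat \<Rightarrow> real) \<Rightarrow> bool) \<Rightarrow> real" where
  "rbm_mass n m J h g E = (\<Sum>x\<in>{x\<in>cube n. E x}. \<Sum>y\<in>cube m. rbm_weight n m J h g x y)"

lemma obs_norm_pos: "obs_norm m J h i y > 0"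
  unfolding obs_norm_def by (simp add: add_pos_pos)

lemma obs_norm_nonzero: "obs_norm m J h i y \<noteq> 0"
  using obs_norm_pos[of m J h i y] by simp

lemma abs_obs_cond_le_one:
  assumes "s \<in> {-1, 1}"
  shows "\<bar>obs_cond m J h i s y\<bar> \<le> 1"
proof -
  have "exp (s * obs_field m J h i y) \<le> obs_norm m J h i y"
    using assms unfolding obs_norm_def by auto
  then show ?thesis unfolding obs_cond_def using obs_norm_pos[of m J h i y] by simp
qed

lemma obs_cond_restrict:
  assumes "{j\<in>{0..<m}. J i j \<noteq> 0} \<subseteq> A"
  shows "obs_cond m J h i s (restrict y A) = obs_cond m J h i s y"
proof -
  have "(\<Sum>j<m. J i j * restrict y A j) = (\<Sum>j<m. J i j * y j)"
    using assms by (intro sum.cong refl) auto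
  then show ?thesis by (simp add: obs_cond_def obs_norm_def obs_field_def)
qed

lemma rbm_weight_eq_prod:
  "rbm_weight n m J h g x y = exp (\<Sum>j<m. g j * y j) * (\<Prod>i<n. exp (x i * obs_field m J h i y))"
proof -
  have "(\<Sum>i<n. \<Sum>j<m. x i * J i j * y j) + (\<Sum>i<n. h i * x i) = (\<Sum>i<n. x i * obs_field m J h i y)"
    unfolding obs_field_def by (simp add: sum.distrib[symmetric] sum_distrib_left algebra_simps)
  then show ?thesis unfolding rbm_weight_def
    by (simp add: exp_add exp_sum[symmetric] add.commute add.left_commute)
qed

lemma rbm_mass_agrees:
  assumes "D \<subseteq> {..<n}" "\<forall>i\<in>D. v i \<in> {-1, 1}"
  shows "rbm_mass n m J h g (agrees D v) = (\<Sum>y\<in>cube m. clamped_weight n m J h g D v y)"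
proof -
  define C where "C i = (if i \<in> D then {v i} else {-1, 1::real})" for i
  have "{x\<in>cube n. agrees D v x} = PiE {..<n} C"
    using assms unfolding cube_def spins_def C_def agrees_def PiE_def Pi_def
    by (auto simp: atLeast0LessThan) metis
  then have "rbm_mass n m J h g (agrees D v) = (\<Sum>x\<in>PiE {..<n} C. \<Sum>y\<in>cube m. rbm_weight n m J h g x y)"
    unfolding rbm_mass_def by simp
  also have "\<dots> = (\<Sum>y\<in>cube m. \<Sum>x\<in>PiE {..<n} C. rbm_weight n m J h g x y)"
    by (rule sum.swap)
  also have "\<dots> = (\<Sum>y\<in>cube m. exp (\<Sum>j<m. g j * y j) *
      (\<Sum>x\<in>PiE {..<n} C. \<Prod>i<n. exp (x i * obs_field m J h i y)))"
    by (simp add: rbm_weight_eq_prod sum_distrib_left)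
  also have "\<dots> = (\<Sum>y\<in>cube m. exp (\<Sum>j<m. g j * y j) *
      (\<Prod>i<n. \<Sum>s\<in>C i. exp (s * obs_field m J h i y)))"
    by (subst prod_sum_PiE) (auto simp: C_def)
  also have "\<dots> = (\<Sum>y\<in>cube m. clamped_weight n m J h g D v y)"
    unfolding clamped_weight_def by (intro sum.cong refl arg_cong2[where f="(*)"] prod.cong) (auto simp: C_def obs_norm_def)
  finally show ?thesis .
qed

lemma clamped_weight_pos: "clamped_weight n m J h g D v y > 0"
  unfolding clamped_weight_def by (auto intro!: mult_pos_pos prod_pos obs_norm_pos)

lemma clamped_weight_Un:
  assumes "T \<subseteq> {..<n}" "D \<inter> T = {}"
  shows "clamped_weight n m J h g (D \<union> T) (\<lambda>i. if i \<in> T then G i else v i) y =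
    clamped_weight n m J h g D v y * (\<Prod>i\<in>T. obs_cond m J h i (G i) y)"
proof -
  have key: "obs_norm m J h i y * obs_cond m J h i s y = exp (s * obs_field m J h i y)" for i s
    by (simp add: obs_cond_def obs_norm_nonzero)
  have "(\<Prod>i<n. if i \<in> D \<union> T then exp ((if i \<in> T then G i else v i) * obs_field m J h i y) else obs_norm m J h i y) =
      (\<Prod>i<n. (if i \<in> D then exp (v i * obs_field m J h i y) else obs_norm m J h i y) *
        (if i \<in> T then obs_cond m J h i (G i) y else 1))"
    using assms(2) by (intro prod.cong refl) (auto simp: key)
  also have "\<dots> = (\<Prod>i<n. if i \<in> D then exp (v i * obs_field m J h i y) else obs_norm m J h i y) *
      (\<Prod>i\<in>T. obs_cond m J h i (G i) y)"
    by (simp add: prod.distrib prod.inter_restrict[symmetric] Int_absorb1[OF assms(1)])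
  finally show ?thesis unfolding clamped_weight_def by (simp add: mult.assoc)
qed

lemma rbm_mass_agrees_Un:
  assumes "D \<union> T \<subseteq> {..<n}" "D \<inter> T = {}" "\<forall>i\<in>D. v i \<in> {-1, 1}" "\<forall>i\<in>T. G i \<in> {-1, 1}"
  shows "rbm_mass n m J h g (\<lambda>x. agrees D v x \<and> agrees T G x) =
    (\<Sum>y\<in>cube m. clamped_weight n m J h g D v y * (\<Prod>i\<in>T. obs_cond m J h i (G i) y))"
proof -
  define v' where "v' i = (if i \<in> T then G i else v i)" for i
  have "(\<lambda>x. agrees D v x \<and> agrees T G x) = agrees (D \<union> T) v'"
    using assms(2) unfolding agrees_def v'_def by auto
  then have "rbm_mass n m J h g (\<lambda>x. agrees D v x \<and> agrees T G x) = rbm_mass n m J h g (agrees (D \<union> T) v')"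
    by simp
  also have "\<dots> = (\<Sum>y\<in>cube m. clamped_weight n m J h g (D \<union> T) v' y)"
    using assms by (intro rbm_mass_agrees) (auto simp: v'_def)
  also have "\<dots> = (\<Sum>y\<in>cube m. clamped_weight n m J h g D v y * (\<Prod>i\<in>T. obs_cond m J h i (G i) y))"
    using assms unfolding v'_def by (simp add: clamped_weight_Un)
  finally show ?thesis .
qed

lemma rbm_mass_agrees_pos:
  assumes "D \<subseteq> {..<n}" "\<forall>i\<in>D. v i \<in> {-1, 1}"
  shows "rbm_mass n m J h g (agrees D v) > 0"
  unfolding rbm_mass_agrees[OF assms] by (rule sum_pos[OF finite_cube cube_nonempty clamped_weight_pos])

lemma rbm_mass_True_pos: "rbm_mass n m J h g (\<lambda>_. True) > 0"
proof -
  have "(\<lambda>_. True) = agrees {} v" for v :: "nat \<Rightarrow> real"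
    by (rule ext) (simp add: agrees_def)
  then show ?thesis using rbm_mass_agrees_pos[of "{}" n] by simp
qed

lemma rbm_cond_eq_mass_ratio:
  "rbm_cond n m J h g E S xS =
    rbm_mass n m J h g (\<lambda>x. E x \<and> agrees S xS x) / rbm_mass n m J h g (agrees S xS)"
proof -
  have "rbm_prob n m J h g E' = rbm_mass n m J h g E' / rbm_mass n m J h g (\<lambda>_. True)" for E'
    unfolding rbm_prob_def rbm_pX_def rbm_mass_def by (simp add: sum_divide_distrib)
  moreover have "rbm_mass n m J h g (\<lambda>_. True) \<noteq> 0"
    using rbm_mass_True_pos[of n m J h g] by simp
  ultimately show ?thesis
    unfolding rbm_cond_def by simp
qed

lemma nu_pt_eq_weighted_moment:
  assumes "u < n" "S \<subseteq> {0..<n}" "u \<notin> S" "r \<in> {-1, 1}" "xS \<in> spins S"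
  obtains a Q where "Q > 0"
    "\<And>T G. T \<subseteq> {0..<n} - insert u S \<Longrightarrow> \<forall>i\<in>T. G i \<in> {-1, 1} \<Longrightarrow>
       nu_pt n m J h g u T S r G xS =
         \<bar>weighted_moment (cube m) a (\<lambda>i. obs_cond m J h i (G i)) T\<bar> / Q"
proof -
  define w where "w = xS(u := r)"
  define M where "M D T G = (\<Sum>y\<in>cube m. clamped_weight n m J h g D w y * (\<Prod>i\<in>T. obs_cond m J h i (G i) y))"
    for D T G
  define Q2 where "Q2 = M S {} w"
  define Q3 where "Q3 = M (insert u S) {} w"
  define a where "a y = clamped_weight n m J h g (insert u S) w y * Q2 - Q3 * clamped_weight n m J h g S w y" for y
  have w: "\<forall>i\<in>insert u S. w i \<in> {-1, 1}"
    using assms unfolding w_def spins_def by auto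
  have mass: "rbm_mass n m J h g (\<lambda>x. agrees D w x \<and> agrees T G x) = M D T G"
    if "D \<in> {S, insert u S}" "T \<subseteq> {0..<n} - insert u S" "\<forall>i\<in>T. G i \<in> {-1, 1}" for D T G
    unfolding M_def using that assms w by (intro rbm_mass_agrees_Un) auto
  have "Q2 > 0"
    unfolding Q2_def M_def by (simp add: sum_pos finite_cube cube_nonempty clamped_weight_pos)
  have "nu_pt n m J h g u T S r G xS = \<bar>weighted_moment (cube m) a (\<lambda>i. obs_cond m J h i (G i)) T\<bar> / Q2\<^sup>2"
    if T: "T \<subseteq> {0..<n} - insert u S" "\<forall>i\<in>T. G i \<in> {-1, 1}" for T G
  proof -
    have "(\<lambda>x. (x u = r \<and> agrees T G x) \<and> agrees S xS x) = (\<lambda>x. agrees (insert u S) w x \<and> agrees T G x)"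
         "(\<lambda>x. x u = r \<and> agrees S xS x) = (\<lambda>x. agrees (insert u S) w x \<and> agrees {} w x)"
         "(\<lambda>x. agrees T G x \<and> agrees S xS x) = (\<lambda>x. agrees S w x \<and> agrees T G x)"
         "agrees S xS = (\<lambda>x. agrees S w x \<and> agrees {} w x)"
      using assms unfolding agrees_def w_def by auto
    then have "nu_pt n m J h g u T S r G xS =
        \<bar>M (insert u S) T G / Q2 - Q3 / Q2 * (M S T G / Q2)\<bar>"
      using T mass unfolding nu_pt_def rbm_cond_eq_mass_ratio Q2_def Q3_def by simp
    also have "\<dots> = \<bar>M (insert u S) T G * Q2 - Q3 * M S T G\<bar> / Q2\<^sup>2"
      using \<open>Q2 > 0\<close> by (simp add: field_simps power2_eq_square)
    also have "M (insert u S) T G * Q2 - Q3 * M S T G = weighted_moment (cube m) a (\<lambda>i. obs_cond m J h i (G i)) T"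
      unfolding M_def a_def weighted_moment_def
      by (simp add: sum_distrib_left sum_distrib_right sum_subtractf[symmetric] algebra_simps)
    finally show ?thesis .
  qed
  with \<open>Q2 > 0\<close> show ?thesis
    by (intro that[where a=a and Q="Q2\<^sup>2"]) auto
qed

section \<open>Reduction to small subsets\<close>

definition latent_nbrs :: "nat \<Rightarrow> (nat \<Rightarrow> nat \<Rightarrow> real) \<Rightarrow> nat set \<Rightarrow> nat set" where
  "latent_nbrs m J I = {j\<in>{0..<m}. \<exists>i\<in>I. J i j \<noteq> 0}"

lemma card_restrict_cube_le:
  assumes "A \<subseteq> {0..<m}"
  shows "card ((\<lambda>y. restrict y A) ` cube m) \<le> 2 ^ card A"
proof -
  have "(\<lambda>y. restrict y A) ` cube m \<subseteq> spins A"
    using assms by (auto simp: cube_def spins_def restrict_PiE_iff PiE_iff)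
  then have "card ((\<lambda>y. restrict y A) ` cube m) \<le> card (spins A)"
    using assms by (intro card_mono finite_spins) (auto intro: finite_subset)
  also have "\<dots> = 2 ^ card A"
    using assms by (intro card_spins) (auto intro: finite_subset)
  finally show ?thesis .
qed

lemma card_latent_nbrs_le_rbm_s:
  assumes "u < n" "I \<subseteq> mrf_nbhd n m J h g u"
  shows "card (latent_nbrs m J I) \<le> rbm_s n m J h g"
proof -
  have "card (latent_nbrs m J I) \<le> card {j\<in>{0..<m}. \<exists>i\<in>mrf_nbhd n m J h g u. J i j \<noteq> 0}"
    using assms(2) unfolding latent_nbrs_def by (intro card_mono) auto
  also have "\<dots> \<le> rbm_s n m J h g"
    unfolding rbm_s_def using assms(1) by (intro Max_ge insertI2 rev_image_eqI[of u]) simp_all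
  finally show ?thesis .
qed

lemma nu_pt_le_sum_small_subsets:
  assumes "u < n" "I \<subseteq> {0..<n}" "S \<subseteq> {0..<n}" "u \<notin> I" "u \<notin> S" "I \<inter> S = {}"
    and "r \<in> {-1, 1}" "xS \<in> spins S" "G \<in> spins I"
    and patterns: "card ((\<lambda>y. restrict y (latent_nbrs m J I)) ` cube m) \<le> K"
  shows "nu_pt n m J h g u I S r G xS \<le>
    (2 * real (card I) + 1) ^ K * (\<Sum>T | T \<subseteq> I \<and> card T \<le> K. nu_pt n m J h g u T S r G xS)"
proof -
  obtain a Q where "Q > 0" and nu_pt_eq: "\<And>T G. T \<subseteq> {0..<n} - insert u S \<Longrightarrow> \<forall>i\<in>T. G i \<in> {-1, 1} \<Longrightarrow>
      nu_pt n m J h g u T S r G xS = \<bar>weighted_moment (cube m) a (\<lambda>i. obs_cond m J h i (G i)) T\<bar> / Q"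
    using nu_pt_eq_weighted_moment[where m=m and J=J and h=h and g=g, OF assms(1,3,5,7,8)] by metis
  define \<pi> :: "(nat \<Rightarrow> real) \<Rightarrow> nat \<Rightarrow> real" where "\<pi> y = restrict y (latent_nbrs m J I)" for y
  define b where "b z = (\<Sum>y\<in>{y\<in>cube m. \<pi> y = z}. a y)" for z
  define TT where "TT = {T. T \<subseteq> I \<and> card T \<le> K}"
  let ?q = "\<lambda>i. obs_cond m J h i (G i)"
  have "finite I" using assms(2) finite_subset by blast
  have G: "\<forall>i\<in>I. G i \<in> {-1, 1}" using assms(9) by (auto simp: spins_def)
  have moment: "nu_pt n m J h g u T S r G xS = \<bar>weighted_moment (\<pi> ` cube m) b ?q T\<bar> / Q"
    if "T \<subseteq> I" for T
  proof -
    have "T \<subseteq> {0..<n} - insert u S" "\<forall>i\<in>T. G i \<in> {-1, 1}"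
      using that assms(2,4,6) G by auto
    then have "nu_pt n m J h g u T S r G xS = \<bar>weighted_moment (cube m) a ?q T\<bar> / Q"
      by (rule nu_pt_eq)
    also have "weighted_moment (cube m) a ?q T = weighted_moment (\<pi> ` cube m) b ?q T"
      unfolding b_def
    proof (rule weighted_moment_image[OF finite_cube])
      show "?q i (\<pi> y) = ?q i y" if "i \<in> T" for i y
        unfolding \<pi>_def using \<open>T \<subseteq> I\<close> that by (intro obs_cond_restrict) (auto simp: latent_nbrs_def)
    qed
    finally show ?thesis .
  qed
  have "\<bar>weighted_moment (\<pi> ` cube m) b ?q I\<bar> \<le>
      (2 * real (card I) + 1) ^ K * (\<Sum>T\<in>TT. \<bar>weighted_moment (\<pi> ` cube m) b ?q T\<bar>)"
  proof (rule weighted_moment_le_small_subsets)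
    show "\<bar>weighted_moment (\<pi> ` cube m) b ?q T\<bar> \<le> (\<Sum>T\<in>TT. \<bar>weighted_moment (\<pi> ` cube m) b ?q T\<bar>)"
      if "T \<subseteq> I" "card T \<le> K" for T
      using that \<open>finite I\<close> by (intro member_le_sum) (auto simp: TT_def)
  qed (use patterns G \<open>finite I\<close> abs_obs_cond_le_one in \<open>auto simp: \<pi>_def finite_cube\<close>)
  with \<open>Q > 0\<close> show ?thesis
    unfolding TT_def by (simp add: moment divide_right_mono sum_divide_distrib[symmetric])
qed

lemma nu_le_sum_small_subsets:
  assumes "u < n" "I \<subseteq> {0..<n}" "S \<subseteq> {0..<n}" "u \<notin> I" "u \<notin> S" "I \<inter> S = {}"
    and "card ((\<lambda>y. restrict y (latent_nbrs m J I)) ` cube m) \<le> K"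
  shows "nu n m J h g u I S \<le>
    (2 * real (card I) + 1) ^ K * (\<Sum>T | T \<subseteq> I \<and> card T \<le> K. nu n m J h g u T S)"
proof -
  define TT where "TT = {T. T \<subseteq> I \<and> card T \<le> K}"
  define C where "C = (2 * real (card I) + 1) ^ K"
  define W where "W xS = rbm_prob n m J h g (agrees S xS) / (2 * 2 ^ card I)" for xS
  have "finite I" using assms(2) finite_subset by blast
  have "nu n m J h g u I S = (\<Sum>r\<in>{-1, 1::real}. \<Sum>G\<in>spins I. \<Sum>xS\<in>spins S.
      W xS * nu_pt n m J h g u I S r G xS)"
    unfolding W_def using \<open>finite I\<close> by (rule nu_eq_average[OF order_refl])
  also have "\<dots> \<le> (\<Sum>r\<in>{-1, 1::real}. \<Sum>G\<in>spins I. \<Sum>xS\<in>spins S.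
      W xS * (C * (\<Sum>T\<in>TT. nu_pt n m J h g u T S r G xS)))"
    unfolding C_def TT_def using assms
    by (intro sum_mono mult_left_mono nu_pt_le_sum_small_subsets) (auto simp: W_def rbm_prob_nonneg)
  also have "\<dots> = C * (\<Sum>T\<in>TT. \<Sum>r\<in>{-1, 1::real}. \<Sum>G\<in>spins I. \<Sum>xS\<in>spins S.
      W xS * nu_pt n m J h g u T S r G xS)"
    by (simp add: sum_distrib_left sum.swap[of _ TT] sum.distrib distrib_left mult_ac)
  also have "\<dots> = C * (\<Sum>T\<in>TT. nu n m J h g u T S)"
    unfolding W_def TT_def using \<open>finite I\<close>
    by (intro arg_cong[where f="(*) C"] sum.cong[OF refl] nu_eq_average[symmetric]) auto
  finally show ?thesis unfolding C_def TT_def .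
qed

lemma ex_sum_le_card_mult:
  fixes f :: "'a \<Rightarrow> real"
  assumes "finite A" "A \<noteq> {}"
  obtains a where "a \<in> A" "sum f A \<le> real (card A) * f a"
proof -
  have "Max (f ` A) \<in> f ` A" using assms by (intro Max_in) auto
  then obtain a where "a \<in> A" "f a = Max (f ` A)" by auto
  moreover have "sum f A \<le> real (card A) * Max (f ` A)"
    using assms by (intro sum_bounded_above Max_ge) auto
  ultimately show ?thesis using that by simp
qed

lemma ex_small_subset_nu_ge:
  assumes "u < n" "I \<subseteq> {0..<n}" "S \<subseteq> {0..<n}" "u \<notin> I" "u \<notin> S" "I \<inter> S = {}"
    and "card ((\<lambda>y. restrict y (latent_nbrs m J I)) ` cube m) \<le> K"
  shows "\<exists>T\<subseteq>I. card T \<le> K \<and>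
    nu n m J h g u I S \<le> (2 * real (card I) + 1) ^ K * real (card I + 1) ^ K * nu n m J h g u T S"
proof -
  define TT where "TT = {T. T \<subseteq> I \<and> card T \<le> K}"
  define C where "C = (2 * real (card I) + 1) ^ K"
  have "finite I" using assms(2) finite_subset by blast
  then have "finite TT" "{} \<in> TT" unfolding TT_def by auto
  then obtain T where T: "T \<in> TT" "(\<Sum>T\<in>TT. nu n m J h g u T S) \<le> real (card TT) * nu n m J h g u T S"
    using ex_sum_le_card_mult by blast
  have "nu n m J h g u I S \<le> C * (\<Sum>T\<in>TT. nu n m J h g u T S)"
    unfolding C_def TT_def using assms by (rule nu_le_sum_small_subsets)
  also have "\<dots> \<le> C * (real (card TT) * nu n m J h g u T S)"
    using T(2) by (simp add: C_def)
  also have "\<dots> \<le> C * (real (card I + 1) ^ K * nu n m J h g u T S)"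
  proof -
    have "real (card TT) \<le> real (card I + 1) ^ K"
      using card_subsets_card_le[OF \<open>finite I\<close>, of K] unfolding TT_def by (metis of_nat_le_iff of_nat_power)
    then show ?thesis
      using nu_nonneg unfolding C_def by (intro mult_left_mono mult_right_mono) simp_all
  qed
  finally show ?thesis
    using T(1) unfolding C_def TT_def by (auto simp: mult.assoc)
qed

lemma power_constant_le_one:
  fixes d :: real
  assumes "d \<ge> 1"
  shows "(1 / (4 * d)) ^ K * (1 / d) ^ (K * (K + 1)) * ((2 * d) ^ K * d ^ K) \<le> 1"
proof -
  have "(1 / (4 * d)) ^ K * (2 * d) ^ K = (1 / 2) ^ K"
    unfolding power_mult_distrib[symmetric] using assms by simp
  moreover have "(1 / d) ^ (K * (K + 1)) * d ^ K = (1 / d) ^ (K * K) * ((1 / d) ^ K * d ^ K)"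
    by (simp add: power_add[symmetric] algebra_simps)
  moreover have "(1 / d) ^ K * d ^ K = 1"
    unfolding power_mult_distrib[symmetric] using assms by simp
  moreover have "(1 / (4 * d)) ^ K * (1 / d) ^ (K * (K + 1)) * ((2 * d) ^ K * d ^ K) =
      ((1 / (4 * d)) ^ K * (2 * d) ^ K) * ((1 / d) ^ (K * (K + 1)) * d ^ K)"
    by (simp only: mult_ac)
  ultimately have "(1 / (4 * d)) ^ K * (1 / d) ^ (K * (K + 1)) * ((2 * d) ^ K * d ^ K) =
      (1 / 2) ^ K * (1 / d) ^ (K * K)"
    by simp
  also have "\<dots> \<le> 1"
    using assms by (intro mult_le_one power_le_one) auto
  finally show ?thesis .
qed

theorem theorem2:
  fixes n m :: nat and J :: "nat \<Rightarrow> nat \<Rightarrow> real" and h g :: "nat \<Rightarrow> real"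
    and u :: nat and I S :: "nat set"
  assumes "u < n" and "I \<subseteq> {0..<n}" and "S \<subseteq> {0..<n}"
    and "u \<notin> I" and "u \<notin> S" and "I \<inter> S = {}"
    and "I \<subseteq> mrf_nbhd n m J h g u"
    and "card I + 1 \<le> rbm_d n m J"
  shows "\<exists>I'\<subseteq>I. card I' \<le> 2 ^ rbm_s n m J h g \<and>
    nu n m J h g u I' S \<ge>
      (1 / (4 * real (rbm_d n m J)) ^ (2 ^ rbm_s n m J h g)) *
      (1 / real (rbm_d n m J)) ^ (2 ^ rbm_s n m J h g * (2 ^ rbm_s n m J h g + 1)) *
      nu n m J h g u I S"
proof -
  define K where "K = (2::nat) ^ rbm_s n m J h g"
  define d where "d = real (rbm_d n m J)"
  have I_le: "real (card I + 1) \<le> d" "2 * real (card I) + 1 \<le> 2 * d"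
    using assms(8) unfolding d_def by linarith+
  have "card ((\<lambda>y. restrict y (latent_nbrs m J I)) ` cube m) \<le> 2 ^ card (latent_nbrs m J I)"
    by (rule card_restrict_cube_le) (auto simp: latent_nbrs_def)
  also have "\<dots> \<le> K"
    unfolding K_def using card_latent_nbrs_le_rbm_s[OF assms(1,7)] by (intro power_increasing) auto
  finally obtain T where T: "T \<subseteq> I" "card T \<le> K"
    and nu_T: "nu n m J h g u I S \<le> (2 * real (card I) + 1) ^ K * real (card I + 1) ^ K * nu n m J h g u T S"
    using ex_small_subset_nu_ge[OF assms(1-6), of m J K h g] by auto
  have "(2 * real (card I) + 1) ^ K * real (card I + 1) ^ K \<le> (2 * d) ^ K * d ^ K"
    using I_le by (intro mult_mono power_mono) auto
  with nu_T have growth: "nu n m J h g u I S \<le> (2 * d) ^ K * d ^ K * nu n m J h g u T S"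
    using nu_nonneg by (meson mult_right_mono order.trans)
  define c where "c = (1 / (4 * d)) ^ K * (1 / d) ^ (K * (K + 1))"
  have "c \<ge> 0" by (simp add: c_def d_def)
  with growth have "c * nu n m J h g u I S \<le> c * ((2 * d) ^ K * d ^ K) * nu n m J h g u T S"
    by (metis mult_left_mono mult.assoc)
  also have "\<dots> \<le> nu n m J h g u T S"
    using power_constant_le_one[of d K] I_le nu_nonneg
    by (intro mult_left_le_one_le) (auto simp: c_def)
  finally show ?thesis
    using T unfolding c_def d_def K_def by (auto simp: power_one_over)
qed

end
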